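(* Let $\pi=(\pi_n^{n+1}\colon(X_{n+1},f_{n+1})\to(X_n,f_n))_{n\ge1}$ be an inverse sequence of equivariant maps satisfying MLC(1), with each $(X_n,f_n)$ a transitive subshift of finite type, and let $(X,f)=\lim_\pi(X_n,f_n)$ with a metric $d$ compatible with its topology. Let $D_\ast=(D_n)_{n\ge1}\in\mathcal{D}_\pi$ be such that $(\pi_n^{n+1}|_{D_{n+1}}\colon D_{n+1}\to D_n)_{n\ge1}$ satisfies MLC(1), and let $D=[D_\ast]=\{x=(x_n)_{n\ge1}\in X:x_n\in D_n\ \forall n\}$. Then for any $\epsilon>0$ there is $\delta>0$ such that every $\delta$-pseudo orbit $(x^{(i)})_{i\ge0}$ of $f$ with $x^{(0)}\in D$ is $\epsilon$-shadowed by some $x\in D$.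
   Context: Equivariant means $\pi_n^{n+1}$ continuous with $f_n\circ\pi_n^{n+1}=\pi_n^{n+1}\circ f_{n+1}$; $\pi_n^m=\pi_n^{n+1}\circ\cdots\circ\pi_{m-1}^m$. $X=\{(x_n)\in\prod_n X_n:\pi_n^{n+1}(x_{n+1})=x_n\ \forall n\}$ (product topology), $f((x_n))=(f_n(x_n))$. An inverse sequence $(p_n\colon Z_{n+1}\to Z_n)$ satisfies MLC(1) if $p_n(Z_{n+1})=p_n(p_{n+1}(Z_{n+2}))$ for all $n$. A subshift of finite type is $(Z,\sigma|_Z)$ with $\sigma$ the shift $(x_i)_{i\ge1}\mapsto(x_{i+1})_{i\ge1}$ on $S^{\mathbb N}$, $S$ finite, and $Z=\{x:(x_i,\dots,x_{i+N})\in F\ \forall i\}$ for some $N>0$, $F\subset S^{N+1}$; transitive means for nonempty open $U,V$ some $k>0$ has $\sigma^k(U)\cap V\neq\emptyset$. For a chain transitive map $g$ of a compact metric space: a $\delta$-chain is $(y_i)_{i=0}^k$, $k>0$, with $d(g(y_i),y_{i+1})\le\delta$, a $\delta$-cycle of length $k$ if $y_0=y_k$; $m(g,\delta)$ is the gcd of lengths of $\delta$-cycles; $y\sim_{g,\delta}z$ iff a $\delta$-chain from $y$ to $z$ of length divisible by $m(g,\delta)$ exists; $y\sim_g z$ iff $y\sim_{g,\delta}z$ for all $\delta$; $\mathcal{D}(g)$ is the set of its equivalence classes. $\mathcal{D}_\pi=\{(D_n)\in\prod_n\mathcal{D}(f_n):\pi_n^{n+1}(D_{n+1})\subset D_n\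 \forall n\}$. A $\delta$-pseudo orbit of $f$ is $(x^{(i)})_{i\ge0}$ with $d(f(x^{(i)}),x^{(i+1)})\le\delta$ for all $i$; it is $\epsilon$-shadowed by $x$ if $d(f^i(x),x^{(i)})\le\epsilon$ for all $i\ge0$. *)

theory Defs
  imports "HOL-Analysis.Analysis"
begin

text \<open>One-sided sequences over an alphabet 'a, indexed by nat (index 0 plays the
role of index 1 in the paper). The full shift carries the product of discrete topologies.\<close>

definition seqtop :: "(nat \<Rightarrow> 'a) topology" where
  "seqtop = product_topology (\<lambda>_. discrete_topology UNIV) UNIV"

definition shtop :: "(nat \<Rightarrow> 'a) set \<Rightarrow> (nat \<Rightarrow> 'a) topology" where
  "shtop Z = subtopology seqtop Z"

definition shift :: "(nat \<Rightarrow> 'a) \<Rightarrow> (nat \<Rightarrow> 'a)" where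
  "shift x = (\<lambda>i. x (Suc i))"

definition sft_set :: "'a set \<Rightarrow> nat \<Rightarrow> 'a list set \<Rightarrow> (nat \<Rightarrow> 'a) set" where
  "sft_set S N F = {x. (\<forall>i. x i \<in> S) \<and> (\<forall>i. map x [i..<i+N+1] \<in> F)}"

definition is_sft :: "(nat \<Rightarrow> 'a) set \<Rightarrow> bool" where
  "is_sft Z \<longleftrightarrow> (\<exists>S N F. finite S \<and> N > 0 \<and>
      F \<subseteq> {w. length w = N + 1 \<and> set w \<subseteq> S} \<and> Z = sft_set S N F)"

definition transitive_sft :: "(nat \<Rightarrow> 'a) set \<Rightarrow> bool" where
  "transitive_sft Z \<longleftrightarrow> is_sft Z \<and>
     (\<forall>U V. openin (shtop Z) U \<and> openin (shtop Z) V \<and> U \<noteq> {} \<and> V \<noteq> {} \<longrightarrow>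
        (\<exists>k>0. (shift ^^ k) ` U \<inter> V \<noteq> {}))"

text \<open>Standard compatible metric on the full shift (used to define chain classes of
the factor systems; the chain classes of a compact system do not depend on the
compatible metric).\<close>
definition sdist :: "(nat \<Rightarrow> 'a) \<Rightarrow> (nat \<Rightarrow> 'a) \<Rightarrow> real" where
  "sdist x y = (if x = y then 0 else (1/2) ^ (LEAST i. x i \<noteq> y i))"

definition is_chain :: "('b \<Rightarrow> 'b) \<Rightarrow> 'b set \<Rightarrow> ('b \<Rightarrow> 'b \<Rightarrow> real) \<Rightarrow> real
     \<Rightarrow> (nat \<Rightarrow> 'b) \<Rightarrow> nat \<Rightarrow> bool" where
  "is_chain g M d \<delta> y k \<longleftrightarrow> k > 0 \<and> (\<forall>i\<le>k. y i \<in> M) \<and>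
      (\<forall>i<k. d (g (y i)) (y (Suc i)) \<le> \<delta>)"

definition chain_m :: "('b \<Rightarrow> 'b) \<Rightarrow> 'b set \<Rightarrow> ('b \<Rightarrow> 'b \<Rightarrow> real) \<Rightarrow> real \<Rightarrow> nat" where
  "chain_m g M d \<delta> = Gcd {k. \<exists>y. is_chain g M d \<delta> y k \<and> y 0 = y k}"

definition chain_rel_delta :: "('b \<Rightarrow> 'b) \<Rightarrow> 'b set \<Rightarrow> ('b \<Rightarrow> 'b \<Rightarrow> real) \<Rightarrow> real
     \<Rightarrow> 'b \<Rightarrow> 'b \<Rightarrow> bool" where
  "chain_rel_delta g M d \<delta> a b \<longleftrightarrow>
     (\<exists>y k. is_chain g M d \<delta> y k \<and> y 0 = a \<and> y k = b \<and> chain_m g M d \<delta> dvd k)"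

definition chain_rel :: "('b \<Rightarrow> 'b) \<Rightarrow> 'b set \<Rightarrow> ('b \<Rightarrow> 'b \<Rightarrow> real) \<Rightarrow> 'b \<Rightarrow> 'b \<Rightarrow> bool" where
  "chain_rel g M d a b \<longleftrightarrow> (\<forall>\<delta>>0. chain_rel_delta g M d \<delta> a b)"

definition chain_classes :: "('b \<Rightarrow> 'b) \<Rightarrow> 'b set \<Rightarrow> ('b \<Rightarrow> 'b \<Rightarrow> real) \<Rightarrow> 'b set set" where
  "chain_classes g M d = (\<lambda>a. {b \<in> M. chain_rel g M d a b}) ` M"

definition MLC1 :: "(nat \<Rightarrow> 'c \<Rightarrow> 'c) \<Rightarrow> (nat \<Rightarrow> 'c set) \<Rightarrow> bool" where
  "MLC1 p Z \<longleftrightarrow> (\<forall>n. p n ` Z (Suc n) = p n ` (p (Suc n) ` Z (Suc (Suc n))))"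

definition inv_lim :: "(nat \<Rightarrow> 'c \<Rightarrow> 'c) \<Rightarrow> (nat \<Rightarrow> 'c set) \<Rightarrow> (nat \<Rightarrow> 'c) set" where
  "inv_lim p Z = {x. (\<forall>n. x n \<in> Z n) \<and> (\<forall>n. p n (x (Suc n)) = x n)}"

definition lim_top :: "(nat \<Rightarrow> (nat \<Rightarrow> 'a) \<Rightarrow> (nat \<Rightarrow> 'a)) \<Rightarrow> (nat \<Rightarrow> (nat \<Rightarrow> 'a) set)
     \<Rightarrow> (nat \<Rightarrow> nat \<Rightarrow> 'a) topology" where
  "lim_top p Z = subtopology (product_topology (\<lambda>n. shtop (Z n)) UNIV) (inv_lim p Z)"

definition lim_map :: "(nat \<Rightarrow> nat \<Rightarrow> 'a) \<Rightarrow> (nat \<Rightarrow> nat \<Rightarrow> 'a)" where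
  "lim_map x = (\<lambda>n. shift (x n))"

end

theory Submission
  imports Defs
begin

(* Both the metric d and the relations agree_lim M (the first M coordinates agree on their
   first M symbols) generate the compact topology of the inverse limit, so by compactness each
   controls the other uniformly.  Hence a delta-pseudo orbit moves, up to a long block of
   coordinates, exactly like f.  At level K = N + 1 the K-th coordinates then form a pseudo orbit
   of the shift, and since X_K is of finite type its diagonal is a genuine point z of X_K tracing
   it.  Chain classes of a transitive subshift of finite type are unions of cylinders of the
   memory length, so z lies in D_K together with the K-th coordinate of x^(0).  MLC(1) for D_*
   lifts pi_N(z) to a point x of D, and uniform continuity of the bonding maps makes the orbit of
   x trace the pseudo orbit on the first N coordinates, which is within epsilon. *)

section \<open>Neighbourhood bases of nested equivalence relations\<close>

definition agree :: "nat \<Rightarrow> (nat \<Rightarrow> 'a) \<Rightarrow> (nat \<Rightarrow> 'a) \<Rightarrow> bool" where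
  "agree M u v \<longleftrightarrow> (\<forall>t<M. u t = v t)"

lemma agree_refl [simp]: "agree M u u"
  by (simp add: agree_def)

lemma agree_trans: "agree M u v \<Longrightarrow> agree M v w \<Longrightarrow> agree M u w"
  by (simp add: agree_def)

lemma agree_mono: "agree M u v \<Longrightarrow> N \<le> M \<Longrightarrow> agree N u v"
  by (auto simp: agree_def)

definition equiv_base :: "'x topology \<Rightarrow> (nat \<Rightarrow> 'x \<Rightarrow> 'x \<Rightarrow> bool) \<Rightarrow> bool" where
  "equiv_base T R \<longleftrightarrow>
     (\<forall>M. equivp (R M)) \<and> (\<forall>M N x y. R M x y \<longrightarrow> N \<le> M \<longrightarrow> R N x y) \<and>
     (\<forall>M x. x \<in> topspace T \<longrightarrow> openin T {y \<in> topspace T. R M y x}) \<and>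
     (\<forall>V x. openin T V \<longrightarrow> x \<in> V \<longrightarrow> (\<exists>M. \<forall>y \<in> topspace T. R M y x \<longrightarrow> y \<in> V))"

lemma equiv_baseD:
  assumes "equiv_base T R"
  shows equiv_base_refl: "R M x x"
    and equiv_base_sym: "R M x y \<Longrightarrow> R M y x"
    and equiv_base_trans: "R M x y \<Longrightarrow> R M y z \<Longrightarrow> R M x z"
    and equiv_base_mono: "R M x y \<Longrightarrow> N \<le> M \<Longrightarrow> R N x y"
    and equiv_base_openin: "x \<in> topspace T \<Longrightarrow> openin T {y \<in> topspace T. R M y x}"
    and equiv_base_nhds: "openin T V \<Longrightarrow> x \<in> V \<Longrightarrow> \<exists>M. \<forall>y \<in> topspace T. R M y x \<longrightarrow> y \<in> V"
  using assms unfolding equiv_base_def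
  by (meson equivp_reflp equivp_symp equivp_transp)+

lemma equiv_base_discrete_topology: "equiv_base (discrete_topology U) (\<lambda>M x y. x = y)"
  unfolding equiv_base_def by (auto intro: identity_equivp)

lemma equiv_base_subtopology:
  assumes "equiv_base T R"
  shows "equiv_base (subtopology T S) R"
  unfolding equiv_base_def
proof (intro conjI allI impI)
  fix M x assume "x \<in> topspace (subtopology T S)"
  then have "openin T {y \<in> topspace T. R M y x}"
    using assms equiv_base_openin by fastforce
  then have "openin (subtopology T S) (S \<inter> {y \<in> topspace T. R M y x})"
    by (rule openin_subtopology_Int2)
  moreover have "S \<inter> {y \<in> topspace T. R M y x} = {y \<in> topspace (subtopology T S). R M y x}"
    by auto
  ultimately show "openin (subtopology T S) {y \<in> topspace (subtopology T S). R M y x}"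
    by simp
next
  fix V x assume "openin (subtopology T S) V" "x \<in> V"
  then obtain W where W: "openin T W" "V = S \<inter> W" "x \<in> W"
    by (auto simp: openin_subtopology)
  then obtain M where "\<forall>y \<in> topspace T. R M y x \<longrightarrow> y \<in> W"
    using assms equiv_base_nhds by metis
  then show "\<exists>M. \<forall>y \<in> topspace (subtopology T S). R M y x \<longrightarrow> y \<in> V"
    using W(2) by auto
qed (use assms in \<open>auto simp: equiv_base_def\<close>)

lemma product_topology_openin_agree:
  assumes base: "\<And>n. equiv_base (T n) R" and x: "x \<in> topspace (product_topology T UNIV)"
  shows "openin (product_topology T UNIV)
           {y \<in> topspace (product_topology T UNIV). \<forall>n<M. R M (y n) (x n)}"
proof -
  let ?U = "\<lambda>n. if n < M then {w \<in> topspace (T n). R M w (x n)} else topspace (T n)"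
  have "{y \<in> topspace (product_topology T UNIV). \<forall>n<M. R M (y n) (x n)} = PiE UNIV ?U"
    by (auto simp: PiE_iff split: if_splits)
  moreover have "openin (product_topology T UNIV) (PiE UNIV ?U)"
  proof (rule product_topology_basis)
    show "openin (T n) (?U n)" for n
      using x equiv_base_openin[OF base] by (auto simp: PiE_iff)
    show "finite {n. ?U n \<noteq> topspace (T n)}"
      by (rule finite_subset[of _ "{..<M}"]) auto
  qed
  ultimately show ?thesis
    by simp
qed

text \<open>Agreement on the first \<open>M\<close> coordinates gives basic neighbourhoods in the product
  only because the index set is \<open>nat\<close>: any finitely many coordinates lie below some \<open>M\<close>.\<close>
lemma product_topology_open_contains_agree:
  assumes base: "\<And>n. equiv_base (T n) R"
    and V: "openin (product_topology T UNIV) V" and x: "x \<in> V"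
  shows "\<exists>M. \<forall>y \<in> topspace (product_topology T UNIV). (\<forall>n<M. R M (y n) (x n)) \<longrightarrow> y \<in> V"
proof -
  obtain U where U: "x \<in> PiE UNIV U" "\<And>n. openin (T n) (U n)"
      "finite {n. U n \<noteq> topspace (T n)}" "PiE UNIV U \<subseteq> V"
    using product_topology_open_contains_basis[OF V x] by blast
  have "\<exists>M. \<forall>y \<in> topspace (T n). R M y (x n) \<longrightarrow> y \<in> U n" for n
    using equiv_base_nhds[OF base U(2) PiE_mem[OF U(1)]] by simp
  then obtain m where m: "\<And>n. \<forall>y \<in> topspace (T n). R (m n) y (x n) \<longrightarrow> y \<in> U n"
    by metis
  define I where "I = {n. U n \<noteq> topspace (T n)}"
  obtain B where B: "I \<subseteq> {..<B}"
    using U(3) finite_nat_bounded unfolding I_def by blast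
  define M where "M = B + (\<Sum>n\<in>I. m n)"
  have "y \<in> V" if y: "y \<in> topspace (product_topology T UNIV)" "\<forall>n<M. R M (y n) (x n)" for y
  proof -
    have yT: "y n \<in> topspace (T n)" for n
      using y(1) by (simp add: PiE_iff)
    have "y n \<in> U n" for n
    proof (cases "n \<in> I")
      case True
      have "m n \<le> sum m I"
        by (rule member_le_sum) (use True U(3) in \<open>simp_all add: I_def\<close>)
      moreover have "n < B" using True B by blast
      ultimately have "R (m n) (y n) (x n)"
        using y(2) equiv_base_mono[OF base] unfolding M_def by (meson le_add2 less_le_trans trans_less_add1)
      then show ?thesis using m yT by blast
    next
      case False
      then show ?thesis using yT by (simp add: I_def)
    qed
    then have "y \<in> PiE UNIV U" by (simp add: PiE_iff)
    then show ?thesis using U(4) by blast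
  qed
  then show ?thesis
    by blast
qed

lemma equiv_base_product_topology:
  fixes T :: "nat \<Rightarrow> 'x topology"
  assumes base: "\<And>n. equiv_base (T n) R"
  shows "equiv_base (product_topology T UNIV) (\<lambda>M x y. \<forall>n<M. R M (x n) (y n))"
  unfolding equiv_base_def
proof (intro conjI allI impI)
  fix M
  show "equivp (\<lambda>x y. \<forall>n<M. R M (x n) (y n))"
    by (intro equivpI reflpI sympI transpI)
      (use equiv_base_refl[OF base] equiv_base_sym[OF base] equiv_base_trans[OF base] in blast)+
next
  fix M N n :: nat and x y :: "nat \<Rightarrow> 'x"
  assume "\<forall>n<M. R M (x n) (y n)" "N \<le> M" "n < N"
  then show "R N (x n) (y n)"
    using equiv_base_mono[OF base] by (meson less_le_trans)
next
  fix M x assume "x \<in> topspace (product_topology T UNIV)"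
  then show "openin (product_topology T UNIV)
      {y \<in> topspace (product_topology T UNIV). \<forall>n<M. R M (y n) (x n)}"
    by (rule product_topology_openin_agree[OF base])
next
  fix V x assume "openin (product_topology T UNIV) V" "x \<in> V"
  then show "\<exists>M. \<forall>y \<in> topspace (product_topology T UNIV). (\<forall>n<M. R M (y n) (x n)) \<longrightarrow> y \<in> V"
    by (rule product_topology_open_contains_agree[OF base])
qed

lemma topspace_seqtop [simp]: "topspace seqtop = UNIV"
  by (simp add: seqtop_def)

lemma topspace_shtop [simp]: "topspace (shtop Z) = Z"
  by (simp add: shtop_def)

lemma equiv_base_seqtop: "equiv_base seqtop agree"
proof -
  have eq: "agree = (\<lambda>M x y. \<forall>n<M. x n = y n)"
    by (simp add: agree_def fun_eq_iff)
  show ?thesis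
    unfolding seqtop_def eq by (rule equiv_base_product_topology[OF equiv_base_discrete_topology])
qed

lemma equiv_base_shtop: "equiv_base (shtop Z) agree"
  unfolding shtop_def by (rule equiv_base_subtopology[OF equiv_base_seqtop])

definition agree_lim :: "nat \<Rightarrow> (nat \<Rightarrow> nat \<Rightarrow> 'a) \<Rightarrow> (nat \<Rightarrow> nat \<Rightarrow> 'a) \<Rightarrow> bool" where
  "agree_lim M x y \<longleftrightarrow> (\<forall>n<M. agree M (x n) (y n))"

lemma equiv_base_lim_top: "equiv_base (lim_top \<pi> Xs) agree_lim"
proof -
  have eq: "agree_lim = (\<lambda>M x y. \<forall>n<M. agree M (x n) (y n))"
    by (simp add: agree_lim_def fun_eq_iff)
  show ?thesis
    unfolding lim_top_def eq
    by (rule equiv_base_subtopology[OF equiv_base_product_topology[OF equiv_base_shtop]])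
qed

section \<open>Uniform control on compact spaces\<close>

lemma compact_equiv_base_uniform:
  assumes cpt: "compact_space T" and base: "equiv_base T R"
    and local: "\<And>u. u \<in> topspace T \<Longrightarrow> \<exists>M. \<forall>v \<in> topspace T. R M v u \<longrightarrow> Q v u"
  shows "\<exists>M. \<forall>x \<in> topspace T. \<forall>y \<in> topspace T. R M x y \<longrightarrow> (\<exists>u \<in> topspace T. Q x u \<and> Q y u)"
proof -
  obtain m where m: "\<And>u v. u \<in> topspace T \<Longrightarrow> v \<in> topspace T \<Longrightarrow> R (m u) v u \<Longrightarrow> Q v u"
    using local by metis
  define C where "C u = {y \<in> topspace T. R (m u) y u}" for u
  have "\<exists>\<F>. finite \<F> \<and> \<F> \<subseteq> C ` topspace T \<and> topspace T \<subseteq> \<Union>\<F>"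
  proof (rule compactinD)
    show "compactin T (topspace T)" using cpt by (simp add: compact_space_def)
    show "openin T U" if "U \<in> C ` topspace T" for U
      using that equiv_base_openin[OF base] by (auto simp: C_def)
    show "topspace T \<subseteq> \<Union> (C ` topspace T)"
      using equiv_base_refl[OF base] by (auto simp: C_def)
  qed
  then obtain \<F> where "finite \<F>" "\<F> \<subseteq> C ` topspace T" "topspace T \<subseteq> \<Union>\<F>"
    by blast
  then obtain F where F: "finite F" "F \<subseteq> topspace T" "topspace T \<subseteq> (\<Union>u\<in>F. C u)"
    using finite_subset_image[of \<F> C "topspace T"] by blast
  have "\<exists>u \<in> topspace T. Q x u \<and> Q y u"
    if x: "x \<in> topspace T" and y: "y \<in> topspace T" and xy: "R (\<Sum>u\<in>F. m u) x y" for x y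
  proof -
    obtain u where u: "u \<in> F" "R (m u) x u"
      using F(3) x by (auto simp: C_def)
    have "m u \<le> (\<Sum>u\<in>F. m u)"
      by (rule member_le_sum) (use F(1) u(1) in auto)
    then have "R (m u) y u"
      using xy u(2) base by (meson equiv_base_mono equiv_base_sym equiv_base_trans)
    then show ?thesis
      using u F(2) x y m by (meson subsetD)
  qed
  then show ?thesis by blast
qed

lemma equiv_base_uniformly_continuous:
  assumes cpt: "compact_space T" and R: "equiv_base T R" and Q: "equiv_base S Q"
    and g: "continuous_map T S g"
  shows "\<exists>M. \<forall>u \<in> topspace T. \<forall>v \<in> topspace T. R M u v \<longrightarrow> Q N (g u) (g v)"
proof -
  have "\<exists>M. \<forall>v \<in> topspace T. R M v u \<longrightarrow> Q N (g v) (g u)" if u: "u \<in> topspace T" for u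
  proof -
    have gu: "g u \<in> topspace S"
      using continuous_map_funspace[OF g] u by (rule funcset_mem)
    let ?V = "{v \<in> topspace T. g v \<in> {w \<in> topspace S. Q N w (g u)}}"
    have "openin T ?V"
      using g equiv_base_openin[OF Q gu] by (rule openin_continuous_map_preimage)
    moreover have "u \<in> ?V"
      using u gu equiv_base_refl[OF Q] by simp
    ultimately obtain M where "\<forall>v \<in> topspace T. R M v u \<longrightarrow> v \<in> ?V"
      using equiv_base_nhds[OF R] by blast
    then show ?thesis by blast
  qed
  then obtain M where M: "\<forall>x \<in> topspace T. \<forall>y \<in> topspace T. R M x y \<longrightarrow>
      (\<exists>u \<in> topspace T. Q N (g x) (g u) \<and> Q N (g y) (g u))"
    using compact_equiv_base_uniform[OF cpt R, where Q = "\<lambda>v u. Q N (g v) (g u)"] by blast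
  have "Q N (g x) (g y)" if xy: "x \<in> topspace T" "y \<in> topspace T" "R M x y" for x y
  proof -
    obtain u where "Q N (g x) (g u)" "Q N (g y) (g u)"
      using M xy by blast
    then show ?thesis
      using equiv_base_trans[OF Q] equiv_base_sym[OF Q] by blast
  qed
  then show ?thesis by blast
qed

context Metric_space
begin

lemma equiv_base_mdist_less:
  assumes cpt: "compact_space mtopology" and base: "equiv_base mtopology R" and "\<epsilon> > 0"
  shows "\<exists>N. \<forall>x \<in> M. \<forall>y \<in> M. R N x y \<longrightarrow> d x y < \<epsilon>"
proof -
  have "\<exists>N. \<forall>v \<in> M. R N v u \<longrightarrow> d u v < \<epsilon>/2" if "u \<in> M" for u
  proof -
    have "u \<in> mball u (\<epsilon>/2)" using that \<open>\<epsilon> > 0\<close> by simp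
    then show ?thesis using equiv_base_nhds[OF base openin_mball] by fastforce
  qed
  then obtain N where N: "\<forall>x \<in> M. \<forall>y \<in> M. R N x y \<longrightarrow> (\<exists>u \<in> M. d u x < \<epsilon>/2 \<and> d u y < \<epsilon>/2)"
    using compact_equiv_base_uniform[OF cpt base, where Q = "\<lambda>v u. d u v < \<epsilon>/2"] by auto
  have "d x y < \<epsilon>" if xy: "x \<in> M" "y \<in> M" "R N x y" for x y
  proof -
    obtain u where "u \<in> M" "d u x < \<epsilon>/2" "d u y < \<epsilon>/2"
      using N xy by blast
    then show ?thesis
      using triangle[of x u y] commute[of u x] xy by linarith
  qed
  then show ?thesis by blast
qed

lemma equiv_base_mdist_le:
  assumes cpt: "compact_space mtopology" and base: "equiv_base mtopology R"
  shows "\<exists>\<delta>>0. \<forall>x \<in> M. \<forall>y \<in> M. d x y \<le> \<delta> \<longrightarrow> R N x y"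
proof -
  let ?C = "(\<lambda>u. {y \<in> M. R N y u}) ` M"
  obtain \<epsilon> where \<epsilon>: "\<epsilon> > 0" "\<forall>x \<in> M. \<exists>U \<in> ?C. mball x \<epsilon> \<subseteq> U"
  proof (rule exE[OF lebesgue_number])
    show "compactin mtopology M" using cpt by (simp add: compact_space_def)
    show "M \<subseteq> \<Union> ?C" using equiv_base_refl[OF base] by blast
    show "openin mtopology U" if "U \<in> ?C" for U
      using that equiv_base_openin[OF base] by auto
  qed (use that in blast)
  have "R N x y" if "x \<in> M" "y \<in> M" "d x y \<le> \<epsilon>/2" for x y
  proof -
    obtain u where "u \<in> M" "mball x \<epsilon> \<subseteq> {y \<in> M. R N y u}"
      using \<epsilon>(2) \<open>x \<in> M\<close> by blast
    moreover have "x \<in> mball x \<epsilon>" "y \<in> mball x \<epsilon>"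
      using that \<epsilon>(1) by auto
    ultimately have "R N x u" "R N y u"
      by blast+
    then show ?thesis
      using equiv_base_trans[OF base] equiv_base_sym[OF base] by blast
  qed
  moreover have "\<epsilon>/2 > 0" using \<epsilon>(1) by simp
  ultimately show ?thesis by blast
qed

end

section \<open>Subshifts of finite type\<close>

lemma funpow_shift: "(shift ^^ k) x = (\<lambda>t. x (t + k))"
  by (induction k) (auto simp: shift_def)

lemma funpow_shift_sft_set: "x \<in> sft_set S N F \<Longrightarrow> (shift ^^ k) x \<in> sft_set S N F"
proof -
  assume x: "x \<in> sft_set S N F"
  have "map (\<lambda>t. x (t + k)) [i..<i+N+1] = map x [i+k..<(i+k)+N+1]" for i
    by (rule nth_equalityI) (simp_all del: upt_Suc add: algebra_simps)
  then show ?thesis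
    using x by (auto simp: sft_set_def funpow_shift)
qed

lemma shift_sft_set: "x \<in> sft_set S N F \<Longrightarrow> shift x \<in> sft_set S N F"
  using funpow_shift_sft_set[of x S N F 1] by simp

lemma is_sft_shift: "is_sft X \<Longrightarrow> x \<in> X \<Longrightarrow> shift x \<in> X"
  by (auto simp: is_sft_def intro: shift_sft_set)

lemma sft_set_if_windows:
  assumes "\<And>i. \<exists>w \<in> sft_set S N F. agree (Suc N) ((shift ^^ i) x) w"
  shows "x \<in> sft_set S N F"
  unfolding sft_set_def
proof (intro CollectI conjI allI)
  fix i
  obtain w where w: "w \<in> sft_set S N F" "agree (Suc N) ((shift ^^ i) x) w"
    using assms by blast
  have "map x [i..<i+N+1] = map w [0..<0+N+1]"
    using w(2) by (intro nth_equalityI) (auto simp del: upt_Suc simp: agree_def funpow_shift add.commute)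
  then show "map x [i..<i+N+1] \<in> F"
    using w(1) unfolding sft_set_def by (metis (mono_tags, lifting) mem_Collect_eq)
  have "x i = w 0"
    using w(2) by (auto simp: agree_def funpow_shift)
  then show "x i \<in> S"
    using w(1) by (simp add: sft_set_def)
qed

lemma sft_set_closed: "closedin seqtop (sft_set S N F)"
proof -
  have "\<exists>T. openin seqtop T \<and> x \<in> T \<and> T \<subseteq> UNIV - sft_set S N F"
    if "x \<notin> sft_set S N F" for x
  proof -
    obtain i where i: "\<forall>w \<in> sft_set S N F. \<not> agree (Suc N) ((shift ^^ i) x) w"
      using \<open>x \<notin> sft_set S N F\<close> sft_set_if_windows by blast
    let ?T = "{y \<in> topspace seqtop. agree (i + Suc N) y x}"
    have "y \<notin> sft_set S N F" if "agree (i + Suc N) y x" for y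
    proof
      assume "y \<in> sft_set S N F"
      have "agree (Suc N) ((shift ^^ i) x) ((shift ^^ i) y)"
        using that by (auto simp: agree_def funpow_shift)
      then show False
        using i funpow_shift_sft_set[OF \<open>y \<in> sft_set S N F\<close>] by blast
    qed
    then have "?T \<subseteq> UNIV - sft_set S N F" by blast
    moreover have "openin seqtop ?T"
      by (rule equiv_base_openin[OF equiv_base_seqtop]) simp
    moreover have "x \<in> ?T"
      by (simp add: agree_def)
    ultimately show ?thesis by blast
  qed
  then have "openin seqtop (UNIV - sft_set S N F)"
    by (subst openin_subopen) blast
  then show ?thesis
    by (simp add: closedin_def)
qed

lemma sft_set_compact:
  assumes "finite S"
  shows "compactin seqtop (sft_set S N F)"
proof -
  have "compactin seqtop (PiE UNIV (\<lambda>_. S))"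
    unfolding seqtop_def compactin_PiE using assms by (simp add: compactin_discrete_topology)
  moreover have "sft_set S N F \<subseteq> PiE UNIV (\<lambda>_. S)"
    by (auto simp: sft_set_def)
  ultimately show ?thesis
    using closed_compactin sft_set_closed by blast
qed

lemma pseudo_orbit_diagonal:
  assumes step: "\<And>u. u < c \<Longrightarrow> agree J (shift (y u)) (y (Suc u))"
  shows "s + r \<le> c \<Longrightarrow> q + r \<le> J \<Longrightarrow> y (s + r) q = y s (q + r)"
proof (induction r arbitrary: q)
  case (Suc r)
  have "y (s + Suc r) q = y (s + r) (Suc q)"
    using step[of "s + r"] Suc.prems by (simp add: agree_def shift_def)
  also have "\<dots> = y s (Suc q + r)"
    using Suc.IH[of "Suc q"] Suc.prems by simp
  finally show ?case by simp
qed simp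

lemma sft_set_diagonal:
  assumes X: "\<And>i. a i \<in> sft_set S N F" and step: "\<And>i. agree M (shift (a i)) (a (Suc i))"
    and "N \<le> M"
  shows sft_set_diagonal_agree: "agree (Suc M) ((shift ^^ i) (\<lambda>j. a j 0)) (a i)"
    and sft_set_diagonal_mem: "(\<lambda>j. a j 0) \<in> sft_set S N F"
proof -
  have "a (i + r) 0 = a i r" if "r \<le> M" for i r
    using pseudo_orbit_diagonal[of "i + r" M a, OF step] that by simp
  then show agree: "agree (Suc M) ((shift ^^ i) (\<lambda>j. a j 0)) (a i)" for i
    by (simp add: agree_def funpow_shift add.commute less_Suc_eq_le)
  show "(\<lambda>j. a j 0) \<in> sft_set S N F"
  proof (rule sft_set_if_windows)
    fix i
    have "agree (Suc N) ((shift ^^ i) (\<lambda>j. a j 0)) (a i)"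
      using agree_mono[OF agree] \<open>N \<le> M\<close> by simp
    then show "\<exists>w \<in> sft_set S N F. agree (Suc N) ((shift ^^ i) (\<lambda>j. a j 0)) w"
      using X by blast
  qed
qed

lemma sdist_le_iff_agree: "sdist a b \<le> (1/2) ^ J \<longleftrightarrow> agree J a b"
proof (cases "a = b")
  case False
  define i where "i = (LEAST i. a i \<noteq> b i)"
  have "a i \<noteq> b i"
    unfolding i_def by (rule LeastI_ex) (use False in blast)
  moreover have "a t = b t" if "t < i" for t
    using not_less_Least[of t "\<lambda>i. a i \<noteq> b i"] that by (simp add: i_def)
  ultimately have "agree J a b \<longleftrightarrow> J \<le> i"
    unfolding agree_def by (metis not_le less_le_trans)
  moreover have "sdist a b = (1/2) ^ i"
    using False by (simp add: sdist_def i_def)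
  ultimately show ?thesis
    by simp
qed (simp add: sdist_def agree_def)

section \<open>Chains and chain classes of the shift\<close>

lemma is_chain_mono: "is_chain g M d \<delta> y k \<Longrightarrow> \<delta> \<le> \<delta>' \<Longrightarrow> is_chain g M d \<delta>' y k"
  by (force simp: is_chain_def)

lemma is_chain_append:
  assumes "is_chain g M d \<delta> y k" "is_chain g M d \<delta> y' k'" "y k = y' 0"
  shows "is_chain g M d \<delta> (\<lambda>i. if i \<le> k then y i else y' (i - k)) (k + k')"
  unfolding is_chain_def
proof (intro conjI allI impI)
  show "0 < k + k'" using assms(1) by (simp add: is_chain_def)
next
  fix i assume "i \<le> k + k'"
  then show "(if i \<le> k then y i else y' (i - k)) \<in> M"
    using assms(1,2) by (auto simp: is_chain_def)
next
  fix i assume i: "i < k + k'"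
  show "d (g (if i \<le> k then y i else y' (i - k)))
          (if Suc i \<le> k then y (Suc i) else y' (Suc i - k)) \<le> \<delta>"
  proof (cases "Suc i \<le> k")
    case True
    then show ?thesis using assms(1) by (simp add: is_chain_def)
  next
    case False
    then have "(if i \<le> k then y i else y' (i - k)) = y' (i - k)" "Suc i - k = Suc (i - k)"
      using assms(3) by (cases "i = k"; simp)+
    then show ?thesis
      using False i assms(2) by (simp add: is_chain_def)
  qed
qed

lemma is_chain_cycle_repeat:
  assumes "is_chain g M d \<delta> y L" "y 0 = y L" "n > 0"
  shows "is_chain g M d \<delta> (\<lambda>i. y (i mod L)) (n * L)"
  unfolding is_chain_def
proof (intro conjI allI impI)
  have L: "L > 0" using assms(1) by (simp add: is_chain_def)
  then show "0 < n * L" using assms(3) by simp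
  fix i
  show "y (i mod L) \<in> M" using assms(1) L by (simp add: is_chain_def)
  have step: "d (g (y j)) (y (Suc j)) \<le> \<delta>" if "j < L" for j
    using assms(1) that by (simp add: is_chain_def)
  show "d (g (y (i mod L))) (y (Suc i mod L)) \<le> \<delta>"
  proof (cases "Suc (i mod L) = L")
    case True
    then have "Suc i mod L = 0" by (simp add: mod_Suc)
    then show ?thesis using step[of "i mod L"] True assms(2) by simp
  next
    case False
    then have "Suc i mod L = Suc (i mod L)" by (simp add: mod_Suc)
    then show ?thesis using step[of "i mod L"] L by simp
  qed
qed

lemma chain_m_dvd_cycle_length: "is_chain g M d \<delta> y k \<Longrightarrow> y 0 = y k \<Longrightarrow> chain_m g M d \<delta> dvd k"
  unfolding chain_m_def by (rule Gcd_dvd) blast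

lemma chain_m_dvd_mono: "\<delta> \<le> \<delta>' \<Longrightarrow> chain_m g M d \<delta>' dvd chain_m g M d \<delta>"
  unfolding chain_m_def by (rule Gcd_greatest) (auto intro: Gcd_dvd is_chain_mono)

lemma chain_classes_subset: "D \<in> chain_classes g M d \<Longrightarrow> D \<subseteq> M"
  by (auto simp: chain_classes_def)

lemma is_chain_shift_iff:
  "is_chain shift X sdist ((1/2) ^ J) y k \<longleftrightarrow>
     k > 0 \<and> (\<forall>i\<le>k. y i \<in> X) \<and> (\<forall>i<k. agree J (shift (y i)) (y (Suc i)))"
  by (simp add: is_chain_def sdist_le_iff_agree)

lemma sft_set_splice:
  assumes X: "X = sft_set S N F" and "N \<le> J"
    and step: "\<And>u. u < c \<Longrightarrow> agree J (shift (y u)) (y (Suc u))"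
    and yX: "\<And>i. i \<le> c \<Longrightarrow> y i \<in> X" and z: "z \<in> X" "agree N z (y c)"
  shows "(\<lambda>s. if s < c then y s 0 else z (s - c)) \<in> X"
proof -
  note diag = pseudo_orbit_diagonal[of c J y, OF step]
  define W where "W = (\<lambda>s. if s < c then y s 0 else z (s - c))"
  have Wy: "W (s + r) = y s r" if "s < c" "r \<le> N" for s r
  proof (cases "s + r < c")
    case True
    then show ?thesis using diag[of s r 0] that \<open>N \<le> J\<close> by (simp add: W_def)
  next
    case False
    define e where "e = c - s"
    have e: "s + e = c" "e \<le> r" "0 < e" using that False by (auto simp: e_def)
    have "s + r - c = r - e" using e by arith
    then have "W (s + r) = z (r - e)" using False by (simp add: W_def)
    also have "\<dots> = y c (r - e)" using z(2) e that by (simp add: agree_def)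
    also have "\<dots> = y s (r - e + e)" using diag[of s e "r - e"] e that \<open>N \<le> J\<close> by simp
    finally show ?thesis using e by simp
  qed
  have "W \<in> X"
    unfolding X
  proof (rule sft_set_if_windows)
    fix s
    show "\<exists>w \<in> sft_set S N F. agree (Suc N) ((shift ^^ s) W) w"
    proof (cases "s < c")
      case True
      have "W (t + s) = y s t" if "t \<le> N" for t
        using Wy[OF True that] by (simp add: add.commute)
      then have "agree (Suc N) ((shift ^^ s) W) (y s)"
        by (simp add: agree_def funpow_shift less_Suc_eq_le)
      then show ?thesis using yX True X by auto
    next
      case False
      then have "(shift ^^ s) W = (shift ^^ (s - c)) z"
        by (simp add: funpow_shift W_def fun_eq_iff)
      then show ?thesis using funpow_shift_sft_set z(1) X agree_refl by metis
    qed
  qed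
  then show ?thesis
    by (simp add: W_def)
qed

text \<open>The new chain runs along the splice of the diagonal of the old one with \<open>z\<close>.\<close>
lemma sft_chain_retarget:
  assumes X: "X = sft_set S N F" and "N \<le> J" "J < c"
    and ch: "is_chain shift X sdist ((1/2) ^ J) y c" and z: "z \<in> X" "agree N z (y c)"
  shows "\<exists>y'. is_chain shift X sdist ((1/2) ^ J) y' c \<and> y' 0 = y 0 \<and> y' c = z"
proof -
  have step: "\<And>u. u < c \<Longrightarrow> agree J (shift (y u)) (y (Suc u))"
    and yX: "\<And>i. i \<le> c \<Longrightarrow> y i \<in> X"
    using ch by (auto simp: is_chain_shift_iff)
  define W where "W = (\<lambda>s. if s < c then y s 0 else z (s - c))"
  have W: "W \<in> X"
    unfolding W_def by (rule sft_set_splice[OF X \<open>N \<le> J\<close> step yX z])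
  define y' where "y' i = (if i = 0 then y 0 else (shift ^^ i) W)" for i
  have "is_chain shift X sdist ((1/2) ^ J) y' c"
    unfolding is_chain_shift_iff
  proof (intro conjI allI impI)
    show "0 < c" using \<open>J < c\<close> by simp
    show "y' i \<in> X" if "i \<le> c" for i
      using yX[of 0] funpow_shift_sft_set[of W S N F i] W X by (simp add: y'_def)
    show "agree J (shift (y' i)) (y' (Suc i))" if "i < c" for i
    proof (cases "i = 0")
      case True
      have "W (Suc t) = y 0 (Suc t)" if "t < J" for t
        using pseudo_orbit_diagonal[of c J y, OF step, of 0 "Suc t" 0] that \<open>J < c\<close>
        by (simp add: W_def)
      then show ?thesis using True by (simp add: y'_def agree_def funpow_shift shift_def)
    next
      case False
      then show ?thesis by (simp add: y'_def agree_def funpow_shift shift_def)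
    qed
  qed
  moreover have "y' c = z"
    using \<open>J < c\<close> by (simp add: y'_def W_def funpow_shift)
  ultimately show ?thesis
    by (auto simp: y'_def)
qed

lemma transitive_sft_cycle:
  assumes tr: "transitive_sft X" and x: "x \<in> X"
  shows "\<exists>y L. is_chain shift X sdist ((1/2) ^ J) y L \<and> y 0 = x \<and> y L = x"
proof -
  obtain S N F where X: "X = sft_set S N F"
    using tr by (auto simp: transitive_sft_def is_sft_def)
  define U where "U = {y \<in> topspace (shtop X). agree (Suc J) y x}"
  define V where "V = {y \<in> topspace (shtop X). agree J y x}"
  have "openin (shtop X) U" "openin (shtop X) V"
    unfolding U_def V_def using equiv_base_openin[OF equiv_base_shtop] x by simp_all
  moreover have "U \<noteq> {}" "V \<noteq> {}"
    using x by (auto simp: U_def V_def)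
  ultimately obtain k where k: "k > 0" "(shift ^^ k) ` U \<inter> V \<noteq> {}"
    using tr unfolding transitive_sft_def by blast
  then obtain w where w: "w \<in> U" "(shift ^^ k) w \<in> V" by blast
  define y where "y i = (if i = 0 \<or> i = k then x else (shift ^^ i) w)" for i
  have "is_chain shift X sdist ((1/2) ^ J) y k"
    unfolding is_chain_shift_iff
  proof (intro conjI allI impI)
    show "0 < k" by fact
    show "y i \<in> X" for i
      using x funpow_shift_sft_set[of w S N F i] w(1) X by (simp add: y_def U_def)
    fix i assume "i < k"
    have "agree J (shift (y i)) ((shift ^^ Suc i) w)"
      using w(1) \<open>i < k\<close> by (auto simp: y_def U_def agree_def shift_def)
    moreover have "agree J ((shift ^^ Suc i) w) (y (Suc i))"
      using w(2) by (auto simp: y_def V_def)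
    ultimately show "agree J (shift (y i)) (y (Suc i))"
      by (rule agree_trans)
  qed
  moreover have "y 0 = x" "y k = x"
    by (simp_all add: y_def)
  ultimately show ?thesis by blast
qed

lemma chain_rel_delta_mono:
  assumes "chain_rel_delta g M d \<delta>' a b" and "\<delta>' \<le> \<delta>"
  shows "chain_rel_delta g M d \<delta> a b"
proof -
  obtain y k where y: "is_chain g M d \<delta>' y k" "y 0 = a" "y k = b" "chain_m g M d \<delta>' dvd k"
    using assms(1) unfolding chain_rel_delta_def by blast
  have "chain_m g M d \<delta> dvd k"
    using chain_m_dvd_mono[OF assms(2)] y(4) by (rule dvd_trans)
  then show ?thesis
    unfolding chain_rel_delta_def using is_chain_mono[OF y(1) assms(2)] y(2,3) by blast
qed

text \<open>To reach \<open>z\<close> with a chain of admissible length, lengthen a chain to \<open>x\<close> by cycles at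
  \<open>x\<close> (which keeps the length divisible by \<open>m\<close>) and retarget its end.\<close>
lemma sft_chain_rel_delta_agree:
  assumes tr: "transitive_sft X" and X: "X = sft_set S N F" and "N \<le> J"
    and ax: "chain_rel_delta shift X sdist ((1/2) ^ J) a x"
    and x: "x \<in> X" and z: "z \<in> X" "agree N z x"
  shows "chain_rel_delta shift X sdist ((1/2) ^ J) a z"
proof -
  let ?\<delta> = "(1/2::real) ^ J"
  obtain y1 k1 where y1: "is_chain shift X sdist ?\<delta> y1 k1" "y1 0 = a" "y1 k1 = x"
      "chain_m shift X sdist ?\<delta> dvd k1"
    using ax unfolding chain_rel_delta_def by blast
  obtain y2 L where y2: "is_chain shift X sdist ?\<delta> y2 L" "y2 0 = x" "y2 L = x"
    using transitive_sft_cycle[OF tr x] by blast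
  have L: "L > 0" "chain_m shift X sdist ?\<delta> dvd L"
    using y2 chain_m_dvd_cycle_length[OF y2(1)] by (auto simp: is_chain_def)
  define c where "c = k1 + Suc J * L"
  define y3 where "y3 i = (if i \<le> k1 then y1 i else y2 ((i - k1) mod L))" for i
  have y3: "is_chain shift X sdist ?\<delta> y3 c"
    unfolding y3_def c_def
    by (rule is_chain_append[OF y1(1) is_chain_cycle_repeat[OF y2(1)]]) (simp_all add: y1 y2)
  have "Suc J \<le> Suc J * L"
    using mult_le_mono2[of 1 L "Suc J"] L(1) by simp
  then have "J < c"
    by (simp add: c_def)
  moreover have "y3 c = x"
    using L(1) by (simp add: y3_def c_def y2)
  ultimately obtain y4 where y4: "is_chain shift X sdist ?\<delta> y4 c" "y4 0 = a" "y4 c = z"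
    using sft_chain_retarget[OF X \<open>N \<le> J\<close> _ y3 z(1)] z(2) y1(2) by (auto simp: y3_def)
  moreover have "chain_m shift X sdist ?\<delta> dvd c"
    using y1(4) L(2) by (simp add: c_def)
  ultimately show ?thesis
    unfolding chain_rel_delta_def by blast
qed

lemma chain_class_agree:
  assumes tr: "transitive_sft X" and X: "X = sft_set S N F"
    and D: "D \<in> chain_classes shift X sdist" and x: "x \<in> D" and z: "z \<in> X" "agree N z x"
  shows "z \<in> D"
proof -
  obtain a where a: "a \<in> X" "D = {b \<in> X. chain_rel shift X sdist a b}"
    using D by (auto simp: chain_classes_def)
  have "chain_rel_delta shift X sdist \<delta> a z" if "\<delta> > 0" for \<delta>
  proof -
    obtain n where n: "(1/2::real) ^ n < \<delta>"
      using real_arch_pow_inv[OF \<open>\<delta> > 0\<close>, of "1/2"] by auto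
    have "(1/2::real) ^ (n + N) \<le> (1/2) ^ n"
      by (rule power_decreasing) auto
    then have \<delta>: "(1/2::real) ^ (n + N) \<le> \<delta>"
      using n by linarith
    have "chain_rel_delta shift X sdist ((1/2) ^ (n + N)) a x"
      using x a(2) unfolding chain_rel_def by simp
    then have "chain_rel_delta shift X sdist ((1/2) ^ (n + N)) a z"
      using sft_chain_rel_delta_agree[OF tr X _ _ _ z] x a(2) by simp
    then show ?thesis
      using \<delta> by (rule chain_rel_delta_mono)
  qed
  then show ?thesis
    using a z by (auto simp: chain_rel_def)
qed

lemma transitive_sft_shadowing:
  assumes tr: "transitive_sft X" and X: "X = sft_set S W F"
    and D: "D \<in> chain_classes shift X sdist" and a: "\<And>i. a i \<in> X"
    and step: "\<And>i. agree L (shift (a i)) (a (Suc i))" and "W \<le> L" and "a 0 \<in> D"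
  shows "\<exists>z \<in> D. \<forall>i. agree (Suc L) ((shift ^^ i) z) (a i)"
proof -
  have aX: "a i \<in> sft_set S W F" for i
    using a X by simp
  have diag: "agree (Suc L) ((shift ^^ i) (\<lambda>j. a j 0)) (a i)" for i
    by (rule sft_set_diagonal_agree[of a S W F L, OF aX step \<open>W \<le> L\<close>])
  have "(\<lambda>j. a j 0) \<in> X"
    unfolding X by (rule sft_set_diagonal_mem[of a S W F L, OF aX step \<open>W \<le> L\<close>])
  moreover have "agree W (\<lambda>j. a j 0) (a 0)"
    using agree_mono[OF diag[of 0]] \<open>W \<le> L\<close> by simp
  ultimately have "(\<lambda>j. a j 0) \<in> D"
    using chain_class_agree[OF tr X D \<open>a 0 \<in> D\<close>] by blast
  with diag show ?thesis
    by blast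
qed

section \<open>Inverse limits\<close>

primrec bonds :: "(nat \<Rightarrow> 'b \<Rightarrow> 'b) \<Rightarrow> nat \<Rightarrow> nat \<Rightarrow> 'b \<Rightarrow> 'b" where
  "bonds p n 0 u = u"
| "bonds p n (Suc j) u = p n (bonds p (Suc n) j u)"

lemma bonds_Suc_inner: "bonds p n (Suc j) u = bonds p n j (p (n + j) u)"
  by (induction j arbitrary: n) auto

lemma bonds_thread:
  assumes "\<And>n. p n (x (Suc n)) = x n"
  shows "bonds p n j (x (n + j)) = x n"
proof (induction j arbitrary: n)
  case (Suc j)
  show ?case using Suc.IH[of "Suc n"] assms[of n] by simp
qed simp

lemma bonds_thread_Suc:
  assumes "\<And>n. p n (x (Suc n)) = x n" and "x N = p N z" and "n \<le> N"
  shows "x n = bonds p n (Suc N - n) z"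
proof -
  have "x n = bonds p n (N - n) (x N)"
    using bonds_thread[of p x n "N - n", OF assms(1)] assms(3) by simp
  also have "\<dots> = bonds p n (Suc N - n) z"
    using assms(2,3) by (simp del: bonds.simps add: bonds_Suc_inner Suc_diff_le)
  finally show ?thesis .
qed

lemma bonds_mem:
  "(\<And>n u. u \<in> Z (Suc n) \<Longrightarrow> p n u \<in> Z n) \<Longrightarrow> u \<in> Z (n + j) \<Longrightarrow> bonds p n j u \<in> Z n"
  by (induction j arbitrary: n) auto

lemma continuous_map_bonds:
  assumes "\<And>n. continuous_map (shtop (Xs (Suc n))) (shtop (Xs n)) (\<pi> n)"
  shows "continuous_map (shtop (Xs (n + j))) (shtop (Xs n)) (bonds \<pi> n j)"
proof (induction j arbitrary: n)
  case (Suc j)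
  have "continuous_map (shtop (Xs (n + Suc j))) (shtop (Xs n)) (\<pi> n \<circ> bonds \<pi> (Suc n) j)"
    using continuous_map_compose[OF Suc.IH[of "Suc n"] assms[of n]] by simp
  then show ?case by (simp add: comp_def)
next
  case 0
  have "bonds \<pi> n 0 = (\<lambda>u. u)" by (simp add: fun_eq_iff)
  then show ?case by simp
qed

lemma funpow_shift_bonds:
  assumes maps: "\<And>n u. u \<in> Xs (Suc n) \<Longrightarrow> \<pi> n u \<in> Xs n"
    and equiv: "\<And>n u. u \<in> Xs (Suc n) \<Longrightarrow> shift (\<pi> n u) = \<pi> n (shift u)"
    and shift: "\<And>n u. u \<in> Xs n \<Longrightarrow> shift u \<in> Xs n"
    and u: "u \<in> Xs (n + j)"
  shows "bonds \<pi> n j ((shift ^^ i) u) = (shift ^^ i) (bonds \<pi> n j u)"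
proof -
  have shift_commute: "bonds \<pi> n j (shift v) = shift (bonds \<pi> n j v)" if "v \<in> Xs (n + j)" for v n j
    using that
  proof (induction j arbitrary: n)
    case (Suc j)
    then have "bonds \<pi> (Suc n) j v \<in> Xs (Suc n)"
      using bonds_mem[of Xs \<pi>, OF maps] by simp
    then show ?case
      using Suc equiv by simp
  qed simp
  have iterates: "(shift ^^ i) u \<in> Xs (n + j)" for i
    using u shift by (induction i) auto
  show ?thesis
  proof (induction i)
    case (Suc i)
    have "bonds \<pi> n j ((shift ^^ Suc i) u) = shift (bonds \<pi> n j ((shift ^^ i) u))"
      using shift_commute[OF iterates[of i]] by simp
    then show ?case
      using Suc.IH by simp
  qed simp
qed

lemma MLC1_lift_sequence:
  assumes mlc: "MLC1 \<pi> Ds" and u: "u \<in> \<pi> m ` Ds (Suc m)"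
  shows "\<exists>c. c 0 = u \<and> (\<forall>j. c j \<in> \<pi> (m + j) ` Ds (Suc (m + j)) \<and> \<pi> (m + j) (c (Suc j)) = c j)"
proof -
  define up where "up j v = (SOME w. w \<in> \<pi> (Suc (m + j)) ` Ds (Suc (Suc (m + j))) \<and> \<pi> (m + j) w = v)"
    for j v
  define c where "c = rec_nat u up"
  have up_step: "c (Suc j) \<in> \<pi> (Suc (m + j)) ` Ds (Suc (Suc (m + j))) \<and> \<pi> (m + j) (c (Suc j)) = c j"
    if "c j \<in> \<pi> (m + j) ` Ds (Suc (m + j))" for j
  proof -
    have "c j \<in> \<pi> (m + j) ` (\<pi> (Suc (m + j)) ` Ds (Suc (Suc (m + j))))"
      using that mlc[unfolded MLC1_def, rule_format, of "m + j"] by argo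
    then have "\<exists>w. w \<in> \<pi> (Suc (m + j)) ` Ds (Suc (Suc (m + j))) \<and> \<pi> (m + j) w = c j"
      by (metis imageE)
    moreover have "c (Suc j) = up j (c j)"
      by (simp add: c_def)
    ultimately show ?thesis
      unfolding up_def by (metis (mono_tags, lifting) someI_ex)
  qed
  have c_mem: "c j \<in> \<pi> (m + j) ` Ds (Suc (m + j))" for j
  proof (induction j)
    case 0 then show ?case using u by (simp add: c_def)
  next
    case (Suc j) then show ?case using up_step by simp
  qed
  moreover have "c 0 = u"
    by (simp add: c_def)
  ultimately show ?thesis
    using up_step by blast
qed

lemma inv_lim_extend:
  assumes mlc: "MLC1 \<pi> Ds" and comp: "\<And>n. \<pi> n ` Ds (Suc n) \<subseteq> Ds n"
    and u: "u \<in> \<pi> m ` Ds (Suc m)"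
  shows "\<exists>x \<in> inv_lim \<pi> Ds. x m = u"
proof -
  obtain c where c0: "c 0 = u"
    and c: "\<And>j. c j \<in> \<pi> (m + j) ` Ds (Suc (m + j)) \<and> \<pi> (m + j) (c (Suc j)) = c j"
    using MLC1_lift_sequence[OF mlc u] by blast
  define x where "x n = (if m \<le> n then c (n - m) else bonds \<pi> n (m - n) u)" for n
  have uD: "u \<in> Ds m" using u comp by blast
  have "x n \<in> Ds n" for n
  proof (cases "m \<le> n")
    case True
    then show ?thesis using c[of "n - m"] comp[of n] by (auto simp: x_def)
  next
    case False
    then show ?thesis
      using bonds_mem[of Ds \<pi> u n "m - n"] comp uD by (auto simp: x_def)
  qed
  moreover have "\<pi> n (x (Suc n)) = x n" for n
  proof (cases "m \<le> n")
    case True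
    then have "Suc n - m = Suc (n - m)" by simp
    then show ?thesis using True c[of "n - m"] by (simp add: x_def)
  next
    case False
    then have "m - n = Suc (m - Suc n)" by simp
    then show ?thesis using False c0 by (cases "m = Suc n") (simp_all add: x_def)
  qed
  moreover have "x m = u" by (simp add: x_def c0)
  ultimately show ?thesis by (auto simp: inv_lim_def)
qed

lemma lim_map_funpow: "(lim_map ^^ i) x = (\<lambda>n. (shift ^^ i) (x n))"
  by (induction i) (auto simp: lim_map_def)

lemma lim_map_inv_lim:
  assumes equiv: "\<And>n u. u \<in> Xs (Suc n) \<Longrightarrow> shift (\<pi> n u) = \<pi> n (shift u)"
    and shift: "\<And>n u. u \<in> Xs n \<Longrightarrow> shift u \<in> Xs n"
    and x: "x \<in> inv_lim \<pi> Xs"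
  shows "lim_map x \<in> inv_lim \<pi> Xs"
proof -
  have "\<pi> n (shift (x (Suc n))) = shift (x n)" for n
    using x equiv[of "x (Suc n)" n] by (simp add: inv_lim_def)
  then show ?thesis
    using x shift by (simp add: inv_lim_def lim_map_def)
qed

lemma funpow_lim_map_inv_lim:
  assumes equiv: "\<And>n u. u \<in> Xs (Suc n) \<Longrightarrow> shift (\<pi> n u) = \<pi> n (shift u)"
    and shift: "\<And>n u. u \<in> Xs n \<Longrightarrow> shift u \<in> Xs n"
    and x: "x \<in> inv_lim \<pi> Xs"
  shows "(lim_map ^^ i) x \<in> inv_lim \<pi> Xs"
  using x by (induction i) (simp_all add: lim_map_inv_lim[of Xs \<pi>, OF equiv shift])

lemma compact_space_lim_top:
  assumes sft: "\<And>n. is_sft (Xs n)"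
    and cont: "\<And>n. continuous_map (shtop (Xs (Suc n))) (shtop (Xs n)) (\<pi> n)"
  shows "compact_space (lim_top \<pi> Xs)"
proof -
  let ?P = "product_topology (\<lambda>n. shtop (Xs n)) UNIV"
  have "compact_space (shtop (Xs n))" for n
  proof -
    obtain S N F where "finite S" "Xs n = sft_set S N F"
      using sft[of n] unfolding is_sft_def by blast
    then have "compactin seqtop (Xs n)"
      by (simp add: sft_set_compact)
    then show ?thesis
      unfolding shtop_def by (rule compact_space_subtopology)
  qed
  then have "compact_space ?P"
    by (simp add: compact_space_product_topology)
  have closed: "closedin ?P {x \<in> topspace ?P. \<pi> n (x (Suc n)) = x n}" for n
  proof (rule closedin_continuous_maps_eq)
    show "Hausdorff_space (shtop (Xs n))"
      unfolding shtop_def seqtop_def by (simp add: Hausdorff_space_subtopology Hausdorff_space_product_topology)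
    have "continuous_map ?P (shtop (Xs (Suc n))) (\<lambda>x. x (Suc n))"
      by (rule continuous_map_product_projection) simp
    from continuous_map_compose[OF this cont[of n]]
    show "continuous_map ?P (shtop (Xs n)) (\<lambda>x. \<pi> n (x (Suc n)))"
      by (simp add: comp_def)
    show "continuous_map ?P (shtop (Xs n)) (\<lambda>x. x n)"
      by (rule continuous_map_product_projection) simp
  qed
  have "inv_lim \<pi> Xs = (\<Inter>n. {x \<in> topspace ?P. \<pi> n (x (Suc n)) = x n})"
    by (auto simp: inv_lim_def PiE_iff)
  moreover have "closedin ?P (\<Inter>n. {x \<in> topspace ?P. \<pi> n (x (Suc n)) = x n})"
    using closed by (intro closedin_INT) auto
  ultimately have "closedin ?P (inv_lim \<pi> Xs)"
    by simp
  with \<open>compact_space ?P\<close> have "compactin ?P (inv_lim \<pi> Xs)"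
    by (rule closedin_compact_space)
  then show ?thesis
    unfolding lim_top_def by (rule compact_space_subtopology)
qed

lemma uniformly_continuous_bonds:
  assumes cpt: "compact_space (shtop (Xs K))"
    and cont: "\<And>n. continuous_map (shtop (Xs (Suc n))) (shtop (Xs n)) (\<pi> n)"
  shows "\<exists>M. \<forall>u \<in> Xs K. \<forall>v \<in> Xs K. agree M u v \<longrightarrow>
           (\<forall>n\<le>K. agree N (bonds \<pi> n (K - n) u) (bonds \<pi> n (K - n) v))"
proof -
  have "\<exists>M. \<forall>u \<in> Xs K. \<forall>v \<in> Xs K. agree M u v \<longrightarrow> agree N (bonds \<pi> n (K - n) u) (bonds \<pi> n (K - n) v)"
    if "n \<le> K" for n
  proof -
    have "continuous_map (shtop (Xs K)) (shtop (Xs n)) (bonds \<pi> n (K - n))"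
      using continuous_map_bonds[of Xs \<pi>, OF cont, of n "K - n"] that by simp
    from equiv_base_uniformly_continuous[OF cpt equiv_base_shtop equiv_base_shtop this]
    show ?thesis by simp
  qed
  then obtain m where m: "\<And>n. n \<le> K \<Longrightarrow> \<forall>u \<in> Xs K. \<forall>v \<in> Xs K.
      agree (m n) u v \<longrightarrow> agree N (bonds \<pi> n (K - n) u) (bonds \<pi> n (K - n) v)"
    by metis
  have "m n \<le> (\<Sum>n\<le>K. m n)" if "n \<le> K" for n
    by (rule member_le_sum) (use that in auto)
  then show ?thesis
    using m agree_mono by blast
qed

lemma agree_lim_from_level_Suc:
  assumes maps: "\<And>n u. u \<in> Xs (Suc n) \<Longrightarrow> \<pi> n u \<in> Xs n"
    and equiv: "\<And>n u. u \<in> Xs (Suc n) \<Longrightarrow> shift (\<pi> n u) = \<pi> n (shift u)"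
    and shift: "\<And>n u. u \<in> Xs n \<Longrightarrow> shift u \<in> Xs n"
    and M: "\<And>u v n. u \<in> Xs (Suc N) \<Longrightarrow> v \<in> Xs (Suc N) \<Longrightarrow> agree M u v \<Longrightarrow> n \<le> Suc N \<Longrightarrow>
              agree N (bonds \<pi> n (Suc N - n) u) (bonds \<pi> n (Suc N - n) v)"
    and x: "\<And>n. \<pi> n (x (Suc n)) = x n" "x N = \<pi> N z" and z: "z \<in> Xs (Suc N)"
    and y: "y \<in> inv_lim \<pi> Xs" and zy: "agree M ((shift ^^ i) z) (y (Suc N))"
  shows "agree_lim N ((lim_map ^^ i) x) y"
proof -
  have "agree N ((shift ^^ i) (x n)) (y n)" if "n < N" for n
  proof -
    have "z \<in> Xs (n + (Suc N - n))"
      using z that by simp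
    then have "(shift ^^ i) (x n) = bonds \<pi> n (Suc N - n) ((shift ^^ i) z)"
      using bonds_thread_Suc[OF x, of n] that funpow_shift_bonds[of Xs \<pi>, OF maps equiv shift]
      by simp
    moreover have "y n = bonds \<pi> n (Suc N - n) (y (Suc N))"
      using bonds_thread[of \<pi> y n "Suc N - n"] y that by (simp add: inv_lim_def)
    moreover have "(shift ^^ i) z \<in> Xs (Suc N)" "y (Suc N) \<in> Xs (Suc N)"
      using z shift y by (induction i) (auto simp: inv_lim_def)
    ultimately show ?thesis
      using M zy that by simp
  qed
  then show ?thesis
    by (simp add: agree_lim_def lim_map_funpow)
qed

lemma inv_lim_agree_shadowing:
  assumes sft: "\<And>n. transitive_sft (Xs n)"
    and cont: "\<And>n. continuous_map (shtop (Xs (Suc n))) (shtop (Xs n)) (\<pi> n)"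
    and equiv: "\<And>n x. x \<in> Xs (Suc n) \<Longrightarrow> shift (\<pi> n x) = \<pi> n (shift x)"
    and Dclass: "\<And>n. Ds n \<in> chain_classes shift (Xs n) sdist"
    and Dcompat: "\<And>n. \<pi> n ` Ds (Suc n) \<subseteq> Ds n"
    and Dmlc: "MLC1 \<pi> Ds"
  shows "\<exists>L. \<forall>xs. (\<forall>i. xs i \<in> inv_lim \<pi> Xs) \<and> (\<forall>i. agree_lim L (lim_map (xs i)) (xs (Suc i))) \<and>
           xs 0 \<in> inv_lim \<pi> Ds \<longrightarrow> (\<exists>x \<in> inv_lim \<pi> Ds. \<forall>i. agree_lim N ((lim_map ^^ i) x) (xs i))"
proof -
  obtain S W F where X: "finite S" "Xs (Suc N) = sft_set S W F"
    using sft[of "Suc N"] by (auto simp: transitive_sft_def is_sft_def)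
  have maps: "\<pi> n u \<in> Xs n" if "u \<in> Xs (Suc n)" for n u
    using funcset_mem[OF continuous_map_funspace[OF cont[of n]], of u] that by simp
  have shift: "\<And>n u. u \<in> Xs n \<Longrightarrow> shift u \<in> Xs n"
    using sft is_sft_shift unfolding transitive_sft_def by blast
  have "compact_space (shtop (Xs (Suc N)))"
    unfolding shtop_def X(2) by (rule compact_space_subtopology[OF sft_set_compact[OF X(1)]])
  from uniformly_continuous_bonds[of Xs "Suc N" \<pi> N, OF this cont]
  obtain M where M: "\<And>u v n. u \<in> Xs (Suc N) \<Longrightarrow> v \<in> Xs (Suc N) \<Longrightarrow> agree M u v \<Longrightarrow> n \<le> Suc N \<Longrightarrow>
      agree N (bonds \<pi> n (Suc N - n) u) (bonds \<pi> n (Suc N - n) v)"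
    by blast
  define L where "L = M + W + N + 2"
  have "\<exists>x \<in> inv_lim \<pi> Ds. \<forall>i. agree_lim N ((lim_map ^^ i) x) (xs i)"
    if xs: "\<And>i. xs i \<in> inv_lim \<pi> Xs" and step: "\<And>i. agree_lim L (lim_map (xs i)) (xs (Suc i))"
      and xs0: "xs 0 \<in> inv_lim \<pi> Ds" for xs
  proof -
    have aX: "xs i (Suc N) \<in> Xs (Suc N)" for i
      using xs[of i] unfolding inv_lim_def by blast
    have a_step: "agree L (shift (xs i (Suc N))) (xs (Suc i) (Suc N))" for i
      using step[of i] by (simp add: agree_lim_def lim_map_def L_def)
    have "W \<le> L" "xs 0 (Suc N) \<in> Ds (Suc N)"
      using xs0 by (simp_all add: L_def inv_lim_def)
    with transitive_sft_shadowing[of "Xs (Suc N)" S W F "Ds (Suc N)" "\<lambda>i. xs i (Suc N)" L,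
        OF sft X(2) Dclass aX a_step]
    obtain z where z: "z \<in> Ds (Suc N)" "\<And>i. agree (Suc L) ((shift ^^ i) z) (xs i (Suc N))"
      by blast
    \<comment> \<open>\<open>z\<close> need not lie in \<open>\<pi> (Suc N) ` Ds (Suc (Suc N))\<close>, so the thread starts one level lower.\<close>
    from inv_lim_extend[OF Dmlc Dcompat imageI[OF z(1)]]
    obtain x where x: "x \<in> inv_lim \<pi> Ds" "x N = \<pi> N z"
      by blast
    have "agree_lim N ((lim_map ^^ i) x) (xs i)" for i
    proof (rule agree_lim_from_level_Suc[of Xs \<pi> N M x z "xs i" i, OF maps equiv shift M _ x(2) _ xs])
      show "\<pi> n (x (Suc n)) = x n" for n
        using x(1) by (simp add: inv_lim_def)
      show "z \<in> Xs (Suc N)"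
        using z(1) chain_classes_subset[OF Dclass] by blast
      show "agree M ((shift ^^ i) z) (xs i (Suc N))"
        using agree_mono[OF z(2)] by (simp add: L_def)
    qed
    with x(1) show ?thesis
      by blast
  qed
  then show ?thesis by blast
qed

theorem lemma5p2:
  fixes Xs :: "nat \<Rightarrow> (nat \<Rightarrow> 'a) set"
    and \<pi> :: "nat \<Rightarrow> (nat \<Rightarrow> 'a) \<Rightarrow> (nat \<Rightarrow> 'a)"
    and d :: "(nat \<Rightarrow> nat \<Rightarrow> 'a) \<Rightarrow> (nat \<Rightarrow> nat \<Rightarrow> 'a) \<Rightarrow> real"
    and Ds :: "nat \<Rightarrow> (nat \<Rightarrow> 'a) set"
    and \<epsilon> :: real
  assumes sft: "\<And>n. transitive_sft (Xs n)"
    and cont: "\<And>n. continuous_map (shtop (Xs (Suc n))) (shtop (Xs n)) (\<pi> n)"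
    and equiv: "\<And>n x. x \<in> Xs (Suc n) \<Longrightarrow> shift (\<pi> n x) = \<pi> n (shift x)"
    and mlc: "MLC1 \<pi> Xs"
    and metric: "Metric_space (inv_lim \<pi> Xs) d"
    and compat: "Metric_space.mtopology (inv_lim \<pi> Xs) d = lim_top \<pi> Xs"
    and Dclass: "\<And>n. Ds n \<in> chain_classes shift (Xs n) sdist"
    and Dcompat: "\<And>n. \<pi> n ` Ds (Suc n) \<subseteq> Ds n"
    and Dmlc: "MLC1 \<pi> Ds"
    and eps: "\<epsilon> > 0"
  shows "\<exists>\<delta>>0. \<forall>xs :: nat \<Rightarrow> (nat \<Rightarrow> nat \<Rightarrow> 'a).
           (\<forall>i. xs i \<in> inv_lim \<pi> Xs) \<and> (\<forall>i. d (lim_map (xs i)) (xs (Suc i)) \<le> \<delta>) \<and>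
           xs 0 \<in> {x \<in> inv_lim \<pi> Xs. \<forall>n. x n \<in> Ds n}
           \<longrightarrow> (\<exists>x \<in> {x \<in> inv_lim \<pi> Xs. \<forall>n. x n \<in> Ds n}.
                  \<forall>i. d ((lim_map ^^ i) x) (xs i) \<le> \<epsilon>)"
proof -
  interpret Metric_space "inv_lim \<pi> Xs" d by (rule metric)
  have cpt: "compact_space mtopology"
    using compact_space_lim_top[of Xs \<pi>] sft cont compat by (simp add: transitive_sft_def)
  have base: "equiv_base mtopology agree_lim"
    using compat equiv_base_lim_top by simp
  obtain N where N: "\<forall>x \<in> inv_lim \<pi> Xs. \<forall>y \<in> inv_lim \<pi> Xs. agree_lim N x y \<longrightarrow> d x y < \<epsilon>"
    using equiv_base_mdist_less[OF cpt base eps] by blast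
  obtain L where L: "\<forall>xs. (\<forall>i. xs i \<in> inv_lim \<pi> Xs) \<and> (\<forall>i. agree_lim L (lim_map (xs i)) (xs (Suc i))) \<and>
      xs 0 \<in> inv_lim \<pi> Ds \<longrightarrow> (\<exists>x \<in> inv_lim \<pi> Ds. \<forall>i. agree_lim N ((lim_map ^^ i) x) (xs i))"
    using inv_lim_agree_shadowing[OF sft cont equiv Dclass Dcompat Dmlc] by blast
  obtain \<delta> where \<delta>: "\<delta> > 0" "\<forall>x \<in> inv_lim \<pi> Xs. \<forall>y \<in> inv_lim \<pi> Xs. d x y \<le> \<delta> \<longrightarrow> agree_lim L x y"
    using equiv_base_mdist_le[OF cpt base] by blast
  have shift: "\<And>n u. u \<in> Xs n \<Longrightarrow> shift u \<in> Xs n"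
    using sft is_sft_shift unfolding transitive_sft_def by blast
  have D: "{x \<in> inv_lim \<pi> Xs. \<forall>n. x n \<in> Ds n} = inv_lim \<pi> Ds"
    using chain_classes_subset[OF Dclass] by (auto simp: inv_lim_def)
  have "\<exists>x \<in> inv_lim \<pi> Ds. \<forall>i. d ((lim_map ^^ i) x) (xs i) \<le> \<epsilon>"
    if xs: "\<forall>i. xs i \<in> inv_lim \<pi> Xs" "\<forall>i. d (lim_map (xs i)) (xs (Suc i)) \<le> \<delta>" "xs 0 \<in> inv_lim \<pi> Ds"
    for xs
  proof -
    have "agree_lim L (lim_map (xs i)) (xs (Suc i))" for i
      using \<delta>(2) xs lim_map_inv_lim[of Xs \<pi>, OF equiv shift] by blast
    then obtain x where x: "x \<in> inv_lim \<pi> Ds" "\<forall>i. agree_lim N ((lim_map ^^ i) x) (xs i)"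
      using L xs by blast
    moreover have "(lim_map ^^ i) x \<in> inv_lim \<pi> Xs" for i
      using funpow_lim_map_inv_lim[of Xs \<pi>, OF equiv shift] x(1) D by blast
    ultimately show ?thesis
      using N xs(1) by (meson less_imp_le)
  qed
  then show ?thesis
    using \<delta>(1) unfolding D by blast
qed

end
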